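(* For every $t\geq 0$ let $Q_t$, $M_t$ and $\psi_t$ be real random variables (on a common probability space) such that $M_t\neq 0$ almost surely and $\psi_t$ is independent of $(Q_t,M_t)$. Suppose $\psi$ is a real random variable satisfying \[ \psi = Q_t + M_t\,\psi_t \quad \text{for all } t\geq 0, \] and such that $\psi$ has the same distribution as $\psi_t$ for all $t\geq 0$, and suppose further that $Q_t\to\psi$ in probability as $t\to\infty$. Then the distribution of $\psi$ has an atom if and only if $\psi$ is almost surely equal to a constant. *)

theory Defs
  imports "HOL-Probability.Probability"
begin

definition conv_in_prob :: "'a measure \<Rightarrow> (real \<Rightarrow> 'a \<Rightarrow> real) \<Rightarrow> ('a \<Rightarrow> real) \<Rightarrow> bool" where
  "conv_in_prob M X Y \<longleftrightarrow>
     (\<forall>e>0. ((\<lambda>t. measure M {x \<in> space M. \<bar>X t x - Y x\<bar> > e}) \<longlongrightarrow> 0) at_top)"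

definition has_atom :: "real measure \<Rightarrow> bool" where
  "has_atom \<mu> \<longleftrightarrow> (\<exists>c. measure \<mu> {c} > 0)"

text \<open>Independence of two random variables with possibly different codomain types
  (the library's indep_var requires equal codomain types); this is exactly the right-hand
  side of the library lemma prob_space.indep_var_eq.\<close>
definition indep_rv :: "'a measure \<Rightarrow> 'b measure \<Rightarrow> ('a \<Rightarrow> 'b) \<Rightarrow> 'c measure \<Rightarrow> ('a \<Rightarrow> 'c) \<Rightarrow> bool" where
  "indep_rv M S X T Y \<longleftrightarrow>
     X \<in> measurable M S \<and> Y \<in> measurable M T \<and>
     prob_space.indep_set M
       (sigma_sets (space M) {X -` A \<inter> space M | A. A \<in> sets S})
       (sigma_sets (space M) {Y -` A \<inter> space M | A. A \<in> sets T})"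

end

theory Submission
  imports Defs
begin

(* Write mu for the law of psi. If psi is not almost surely 0, then eta = P(|psi_t| > delta) > 0
   for some delta > 0, and independence gives eta * P(|M_t| > e) <= P(|Q_t - psi| > e * delta);
   hence M_t -> 0 in probability. Let c be an atom of maximal mass p; only finitely many atoms
   have mass p. By independence, p = P(psi = c) = E mu{(c - Q_t) / M_t}, and the integrand never
   exceeds p, so (c - Q_t) / M_t is almost surely one of these finitely many atoms, which gives
   |Q_t - c| <= R |M_t|. Therefore Q_t -> c in probability, and since also Q_t -> psi,
   psi = c almost surely. *)

lemma indep_rv_compose_right:
  assumes "prob_space M" and indep: "indep_rv M S X T Y" and g: "g \<in> measurable T U"
  shows "indep_rv M S X U (\<lambda>x. g (Y x))"
proof -
  interpret prob_space M by fact
  have Y: "Y \<in> measurable M T" using indep unfolding indep_rv_def by blast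
  have "{(\<lambda>x. g (Y x)) -` A \<inter> space M | A. A \<in> sets U} \<subseteq> {Y -` B \<inter> space M | B. B \<in> sets T}"
  proof safe
    fix A assume "A \<in> sets U"
    then have "(\<lambda>x. g (Y x)) -` A \<inter> space M = Y -` (g -` A \<inter> space T) \<inter> space M
        \<and> g -` A \<inter> space T \<in> sets T"
      using g measurable_space[OF Y] by (auto simp: measurable_sets)
    then show "\<exists>B. (\<lambda>x. g (Y x)) -` A \<inter> space M = Y -` B \<inter> space M \<and> B \<in> sets T" by blast
  qed
  then have sub: "sigma_sets (space M) {(\<lambda>x. g (Y x)) -` A \<inter> space M | A. A \<in> sets U}
      \<subseteq> sigma_sets (space M) {Y -` B \<inter> space M | B. B \<in> sets T}"
    by (intro sigma_sets_mono subset_trans[OF _ sigma_sets_superset_generator])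
  have "indep_set (sigma_sets (space M) {X -` A \<inter> space M | A. A \<in> sets S})
      (sigma_sets (space M) {Y -` B \<inter> space M | B. B \<in> sets T})"
    using indep unfolding indep_rv_def by blast
  then have "indep_set (sigma_sets (space M) {X -` A \<inter> space M | A. A \<in> sets S})
      (sigma_sets (space M) {(\<lambda>x. g (Y x)) -` A \<inter> space M | A. A \<in> sets U})"
    unfolding indep_set_def by (rule indep_sets_mono_sets) (use sub in \<open>auto split: bool.split\<close>)
  with indep g show ?thesis
    unfolding indep_rv_def by (auto simp: measurable_compose[OF Y g])
qed

lemma indep_rvD:
  assumes "prob_space M" and indep: "indep_rv M S X T Y" and "A \<in> sets S" and "B \<in> sets T"
  shows "measure M {x \<in> space M. X x \<in> A \<and> Y x \<in> B} =
         measure M {x \<in> space M. X x \<in> A} * measure M {x \<in> space M. Y x \<in> B}"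
proof -
  interpret prob_space M by fact
  have "X -` A \<inter> space M \<in> sigma_sets (space M) {X -` A \<inter> space M | A. A \<in> sets S}"
    and "Y -` B \<inter> space M \<in> sigma_sets (space M) {Y -` B \<inter> space M | B. B \<in> sets T}"
    using assms(3,4) by (auto intro: sigma_sets.Basic)
  with indep have "prob ((X -` A \<inter> space M) \<inter> (Y -` B \<inter> space M))
      = prob (X -` A \<inter> space M) * prob (Y -` B \<inter> space M)"
    unfolding indep_rv_def by (blast intro: indep_setD)
  then show ?thesis by (simp add: Int_def conj_commute vimage_def conj_left_commute)
qed

lemma indep_rv_distr_pair:
  assumes "prob_space M" and indep: "indep_rv M S X T Y"
  shows "distr M (T \<Otimes>\<^sub>M S) (\<lambda>x. (Y x, X x)) = distr M T Y \<Otimes>\<^sub>M distr M S X"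
proof -
  interpret prob_space M by fact
  have X: "X \<in> measurable M S" and Y: "Y \<in> measurable M T"
    using indep unfolding indep_rv_def by auto
  interpret Y: prob_space "distr M T Y" using Y by (rule prob_space_distr)
  interpret X: prob_space "distr M S X" using X by (rule prob_space_distr)
  show ?thesis
  proof (rule pair_measure_eqI[symmetric])
    show "sigma_finite_measure (distr M T Y)" "sigma_finite_measure (distr M S X)"
      by unfold_locales
    fix A B assume A: "A \<in> sets (distr M T Y)" and B: "B \<in> sets (distr M S X)"
    have "(\<lambda>x. (Y x, X x)) -` (A \<times> B) \<inter> space M = {x \<in> space M. X x \<in> B \<and> Y x \<in> A}"
      "X -` B \<inter> space M = {x \<in> space M. X x \<in> B}" "Y -` A \<inter> space M = {x \<in> space M. Y x \<in> A}"
      by auto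
    moreover have "(\<lambda>x. (Y x, X x)) \<in> measurable M (T \<Otimes>\<^sub>M S)" using X Y by measurable
    ultimately show "emeasure (distr M T Y) A * emeasure (distr M S X) B =
        emeasure (distr M (T \<Otimes>\<^sub>M S) (\<lambda>x. (Y x, X x))) (A \<times> B)"
      using A B X Y indep_rvD[OF assms(1) indep, of B A]
      by (simp add: emeasure_distr emeasure_eq_measure ennreal_mult' mult.commute)
  qed simp
qed

lemma finite_heavy_atoms:
  assumes "finite_measure N" and singleton: "\<And>a. {a} \<in> sets N" and "d > 0"
  shows "finite {a. d < measure N {a}}"
proof (rule ccontr)
  interpret finite_measure N by fact
  assume "infinite {a. d < measure N {a}}"
  then obtain B where B: "finite B" "card B = nat \<lceil>measure N (space N) / d\<rceil> + 1"
    and heavy: "B \<subseteq> {a. d < measure N {a}}"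
    using infinite_arbitrarily_large by blast
  have "measure N (space N) / d < card B" using B(2) by linarith
  then have "measure N (space N) < card B * d" using \<open>d > 0\<close> by (simp add: field_simps)
  also have "\<dots> = (\<Sum>a\<in>B. d)" by simp
  also have "\<dots> \<le> (\<Sum>a\<in>B. measure N {a})" using heavy by (intro sum_mono) auto
  also have "\<dots> = measure N B"
    using B(1) singleton by (rule finite_measure_eq_sum_singleton[symmetric])
  also have "\<dots> \<le> measure N (space N)" by (rule bounded_measure)
  finally show False by simp
qed

lemma exists_heaviest_atom:
  assumes "finite_measure N" and singleton: "\<And>a. {a} \<in> sets N" and "0 < measure N {c0}"
  shows "\<exists>c. \<forall>a. measure N {a} \<le> measure N {c}"
proof -
  define G where "G = {a. measure N {c0} / 2 < measure N {a}}"
  have "finite G" "c0 \<in> G"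
    using finite_heavy_atoms[OF assms(1,2), of "measure N {c0} / 2"] assms(3) by (auto simp: G_def)
  then obtain c where "c \<in> G" and c: "\<forall>a\<in>G. measure N {a} \<le> measure N {c}"
    using ex_is_arg_min_if_finite[of G "\<lambda>a. - measure N {a}"]
    by (auto simp: is_arg_min_def not_less)
  have "measure N {a} \<le> measure N {c}" for a
  proof (cases "a \<in> G")
    case False
    then have "measure N {a} \<le> measure N {c0}" using assms(3) by (simp add: G_def)
    also have "\<dots> \<le> measure N {c}" using c \<open>c0 \<in> G\<close> by blast
    finally show ?thesis .
  qed (use c in blast)
  then show ?thesis by blast
qed

lemma AE_eq_if_deviations_null:
  fixes f g :: "'a \<Rightarrow> real"
  assumes "finite_measure M" and "f \<in> borel_measurable M" and "g \<in> borel_measurable M"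
    and null: "\<And>e. e > 0 \<Longrightarrow> measure M {x \<in> space M. e < \<bar>f x - g x\<bar>} = 0"
  shows "AE x in M. f x = g x"
proof (rule AE_I')
  interpret finite_measure M by fact
  show "(\<Union>n. {x \<in> space M. 1 / Suc n < \<bar>f x - g x\<bar>}) \<in> null_sets M"
    using assms(2,3) null by (intro null_sets_UN) (simp add: null_sets_def emeasure_eq_measure)
  show "{x \<in> space M. f x \<noteq> g x} \<subseteq> (\<Union>n. {x \<in> space M. 1 / Suc n < \<bar>f x - g x\<bar>})"
  proof safe
    fix x assume "x \<in> space M" "f x \<noteq> g x"
    moreover obtain n :: nat where "1 / Suc n < \<bar>f x - g x\<bar>"
      using reals_Archimedean[of "\<bar>f x - g x\<bar>"] \<open>f x \<noteq> g x\<close> by (auto simp: inverse_eq_divide)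
    ultimately show "x \<in> (\<Union>n. {x \<in> space M. 1 / Suc n < \<bar>f x - g x\<bar>})" by blast
  qed
qed

lemma conv_in_prob_dominated:
  assumes "finite_measure M" and "R > 0"
    and "\<forall>\<^sub>F t in at_top. Y t \<in> borel_measurable M" and "W \<in> borel_measurable M"
    and dominated: "\<forall>\<^sub>F t in at_top. AE x in M. \<bar>X t x - Z x\<bar> \<le> R * \<bar>Y t x - W x\<bar>"
    and "conv_in_prob M Y W"
  shows "conv_in_prob M X Z"
  unfolding conv_in_prob_def
proof (intro allI impI)
  interpret finite_measure M by fact
  fix e :: real assume "e > 0"
  show "((\<lambda>t. measure M {x \<in> space M. e < \<bar>X t x - Z x\<bar>}) \<longlongrightarrow> 0) at_top"
  proof (rule tendsto_sandwich[OF _ _ tendsto_const])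
    show "((\<lambda>t. measure M {x \<in> space M. e / R < \<bar>Y t x - W x\<bar>}) \<longlongrightarrow> 0) at_top"
      using \<open>conv_in_prob M Y W\<close> \<open>e > 0\<close> \<open>R > 0\<close> unfolding conv_in_prob_def by simp
    show "\<forall>\<^sub>F t in at_top. measure M {x \<in> space M. e < \<bar>X t x - Z x\<bar>}
        \<le> measure M {x \<in> space M. e / R < \<bar>Y t x - W x\<bar>}"
      using assms(3) dominated
    proof eventually_elim
      case (elim t)
      from elim(2) have "AE x in M. e < \<bar>X t x - Z x\<bar> \<longrightarrow> e / R < \<bar>Y t x - W x\<bar>"
        by eventually_elim (use \<open>R > 0\<close> in \<open>auto simp: divide_less_eq mult.commute\<close>)
      then show ?case using elim(1) assms(4) by (intro finite_measure_mono_AE) auto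
    qed
  qed auto
qed

lemma conv_in_prob_unique:
  assumes "finite_measure M" and "\<forall>\<^sub>F t in at_top. X t \<in> borel_measurable M"
    and "Y \<in> borel_measurable M" and "Z \<in> borel_measurable M"
    and "conv_in_prob M X Y" and "conv_in_prob M X Z"
  shows "AE x in M. Y x = Z x"
proof (rule AE_eq_if_deviations_null[OF assms(1,3,4)])
  interpret finite_measure M by fact
  fix e :: real assume "e > 0"
  let ?dev = "\<lambda>t V. measure M {x \<in> space M. e / 2 < \<bar>X t x - V x\<bar>}"
  have "e / 2 > 0" using \<open>e > 0\<close> by simp
  then have "((\<lambda>t. ?dev t Y + ?dev t Z) \<longlongrightarrow> 0 + 0) at_top"
    using assms(5,6) unfolding conv_in_prob_def by (intro tendsto_add) blast+
  moreover have "\<forall>\<^sub>F t in at_top. measure M {x \<in> space M. e < \<bar>Y x - Z x\<bar>} \<le> ?dev t Y + ?dev t Z"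
    using assms(2)
  proof eventually_elim
    case (elim t)
    have "{x \<in> space M. e < \<bar>Y x - Z x\<bar>}
        \<subseteq> {x \<in> space M. e / 2 < \<bar>X t x - Y x\<bar>} \<union> {x \<in> space M. e / 2 < \<bar>X t x - Z x\<bar>}"
      by (auto simp: abs_if)
    then have "measure M {x \<in> space M. e < \<bar>Y x - Z x\<bar>}
        \<le> measure M ({x \<in> space M. e / 2 < \<bar>X t x - Y x\<bar>} \<union> {x \<in> space M. e / 2 < \<bar>X t x - Z x\<bar>})"
      using elim assms(3,4) by (intro finite_measure_mono; measurable)
    also have "\<dots> \<le> ?dev t Y + ?dev t Z"
      using elim assms(3,4) by (intro measure_Un_le) auto
    finally show ?case .
  qed
  ultimately have "measure M {x \<in> space M. e < \<bar>Y x - Z x\<bar>} \<le> 0"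
    by (intro tendsto_lowerbound[OF _ _ trivial_limit_at_top_linorder]) simp_all
  then show "measure M {x \<in> space M. e < \<bar>Y x - Z x\<bar>} = 0" by (simp add: measure_le_0_iff)
qed

lemma conv_in_prob_zero_factor:
  fixes X Y :: "real \<Rightarrow> 'a \<Rightarrow> real"
  assumes "prob_space M" and "Y0 \<in> borel_measurable M" and "\<not> (AE x in M. Y0 x = 0)"
    and indep: "\<forall>\<^sub>F t in at_top. X t \<in> borel_measurable M \<and> indep_rv M borel (Y t) borel (X t)
        \<and> distr M borel (Y t) = distr M borel Y0"
    and "conv_in_prob M (\<lambda>t x. X t x * Y t x) (\<lambda>_. 0)"
  shows "conv_in_prob M X (\<lambda>_. 0)"
proof -
  interpret prob_space M by fact
  obtain \<delta> where "\<delta> > 0" and "prob {x \<in> space M. \<delta> < \<bar>Y0 x\<bar>} \<noteq> 0"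
    using AE_eq_if_deviations_null[of M Y0 "\<lambda>_. 0"] assms(2,3) by auto
  define \<eta> where "\<eta> = prob {x \<in> space M. \<delta> < \<bar>Y0 x\<bar>}"
  have "\<eta> > 0" using \<open>prob _ \<noteq> 0\<close> by (simp add: \<eta>_def zero_less_measure_iff)
  show ?thesis
    unfolding conv_in_prob_def
  proof (intro allI impI)
    fix e :: real assume "e > 0"
    have "((\<lambda>t. prob {x \<in> space M. e * \<delta> < \<bar>X t x * Y t x\<bar>} / \<eta>) \<longlongrightarrow> 0 / \<eta>) at_top"
      using assms(5) \<open>e > 0\<close> \<open>\<delta> > 0\<close> \<open>\<eta> > 0\<close> unfolding conv_in_prob_def
      by (intro tendsto_divide) auto
    moreover have "\<forall>\<^sub>F t in at_top.
        prob {x \<in> space M. e < \<bar>X t x\<bar>} \<le> prob {x \<in> space M. e * \<delta> < \<bar>X t x * Y t x\<bar>} / \<eta>"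
      using indep
    proof eventually_elim
      case (elim t)
      then have X: "X t \<in> borel_measurable M" and Y: "Y t \<in> borel_measurable M"
        by (simp_all add: indep_rv_def)
      have "prob {x \<in> space M. \<delta> < \<bar>Y t x\<bar>} = \<eta>"
        using arg_cong[OF elim[THEN conjunct2, THEN conjunct2], of "\<lambda>\<mu>. measure \<mu> {u. \<delta> < \<bar>u\<bar>}"]
          Y assms(2) by (simp add: measure_distr \<eta>_def vimage_def Int_def conj_commute)
      then have "\<eta> * prob {x \<in> space M. e < \<bar>X t x\<bar>}
          = prob {x \<in> space M. Y t x \<in> {u. \<delta> < \<bar>u\<bar>} \<and> X t x \<in> {u. e < \<bar>u\<bar>}}"
        using indep_rvD[OF assms(1), of borel "Y t" borel "X t" "{u. \<delta> < \<bar>u\<bar>}" "{u. e < \<bar>u\<bar>}"] elim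
        by simp
      also have "\<dots> \<le> prob {x \<in> space M. e * \<delta> < \<bar>X t x * Y t x\<bar>}"
      proof (rule finite_measure_mono)
        show "{x \<in> space M. Y t x \<in> {u. \<delta> < \<bar>u\<bar>} \<and> X t x \<in> {u. e < \<bar>u\<bar>}}
            \<subseteq> {x \<in> space M. e * \<delta> < \<bar>X t x * Y t x\<bar>}"
          using \<open>e > 0\<close> \<open>\<delta> > 0\<close> by (auto simp: abs_mult intro: mult_strict_mono)
        show "{x \<in> space M. e * \<delta> < \<bar>X t x * Y t x\<bar>} \<in> events" using X Y by measurable
      qed
      finally show ?case using \<open>\<eta> > 0\<close> by (simp add: field_simps)
    qed
    ultimately show "((\<lambda>t. prob {x \<in> space M. e < \<bar>X t x - 0\<bar>}) \<longlongrightarrow> 0) at_top"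
      by (auto intro: tendsto_sandwich[OF _ _ tendsto_const])
  qed
qed

lemma (in prob_space) AE_eq_bound_if_nn_integral_eq:
  assumes "f \<in> borel_measurable M" and "AE x in M. f x \<le> ennreal p" and "(\<integral>\<^sup>+x. f x \<partial>M) = ennreal p"
  shows "AE x in M. f x = ennreal p"
proof -
  have "(\<integral>\<^sup>+x. ennreal p - f x \<partial>M) = (\<integral>\<^sup>+x. ennreal p \<partial>M) - (\<integral>\<^sup>+x. f x \<partial>M)"
    using assms by (intro nn_integral_diff) auto
  also have "\<dots> = 0" using assms(3) by (simp add: emeasure_space_1)
  finally have "AE x in M. ennreal p - f x = 0"
    using assms(1) by (subst (asm) nn_integral_0_iff_AE) auto
  with assms(2) show ?thesis
    by eventually_elim (simp add: diff_eq_0_iff_ennreal antisym)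
qed

lemma heaviest_atom_affine_preimage:
  fixes A B X Y :: "'a \<Rightarrow> real"
  assumes "prob_space M"
    and A: "A \<in> borel_measurable M" and B: "B \<in> borel_measurable M" and X: "X \<in> borel_measurable M"
    and indep: "indep_rv M borel Y (borel \<Otimes>\<^sub>M borel) (\<lambda>x. (A x, B x))"
    and "AE x in M. B x \<noteq> 0"
    and affine: "AE x in M. X x = A x + B x * Y x"
    and same_distr: "distr M borel X = distr M borel Y"
    and heaviest: "\<And>a. measure (distr M borel Y) {a} \<le> measure (distr M borel Y) {c}"
  shows "AE x in M. measure (distr M borel Y) {(c - A x) / B x} = measure (distr M borel Y) {c}"
proof -
  interpret prob_space M by fact
  define \<mu> where "\<mu> = distr M borel Y"
  define \<nu> where "\<nu> = distr M (borel \<Otimes>\<^sub>M borel) (\<lambda>x. (A x, B x))"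
  define p where "p = measure \<mu> {c}"
  have Y: "Y \<in> borel_measurable M" using indep by (simp add: indep_rv_def)
  have AB: "(\<lambda>x. (A x, B x)) \<in> measurable M (borel \<Otimes>\<^sub>M borel)" using A B by measurable
  interpret \<mu>: prob_space \<mu> unfolding \<mu>_def using Y by (rule prob_space_distr)
  interpret \<nu>: prob_space \<nu> unfolding \<nu>_def using AB by (rule prob_space_distr)
  define E where "E = {w :: (real \<times> real) \<times> real. fst (fst w) + snd (fst w) * snd w = c}"
  have "{w \<in> space ((borel \<Otimes>\<^sub>M borel) \<Otimes>\<^sub>M borel). fst (fst w) + snd (fst w) * snd w = c}
      \<in> sets ((borel \<Otimes>\<^sub>M borel) \<Otimes>\<^sub>M borel)"
    by measurable
  then have E: "E \<in> sets (\<nu> \<Otimes>\<^sub>M \<mu>)"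
    unfolding E_def \<mu>_def \<nu>_def by (simp add: space_pair_measure cong: sets_pair_measure_cong)
  have "ennreal p = emeasure M {x \<in> space M. X x = c}"
    using X by (simp add: p_def \<mu>_def same_distr[symmetric] measure_distr emeasure_eq_measure
        vimage_def Int_def conj_commute)
  also have "\<dots> = emeasure M ((\<lambda>x. ((A x, B x), Y x)) -` E \<inter> space M)"
    using affine A B X Y by (intro emeasure_eq_AE) (auto simp: E_def)
  also have "\<dots> = emeasure (distr M ((borel \<Otimes>\<^sub>M borel) \<Otimes>\<^sub>M borel) (\<lambda>x. ((A x, B x), Y x))) E"
    using AB Y E
    by (subst emeasure_distr) (measurable, simp_all add: \<mu>_def \<nu>_def cong: sets_pair_measure_cong)
  also have "\<dots> = emeasure (\<nu> \<Otimes>\<^sub>M \<mu>) E"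
    unfolding \<mu>_def \<nu>_def indep_rv_distr_pair[OF assms(1) indep] ..
  also have "\<dots> = (\<integral>\<^sup>+z. emeasure \<mu> (Pair z -` E) \<partial>\<nu>)"
    using E by (rule \<mu>.emeasure_pair_measure_alt)
  finally have total: "(\<integral>\<^sup>+z. emeasure \<mu> (Pair z -` E) \<partial>\<nu>) = ennreal p" ..
  have slice_measurable: "(\<lambda>z. emeasure \<mu> (Pair z -` E)) \<in> borel_measurable \<nu>"
    using E by (rule \<mu>.measurable_emeasure_Pair)
  have "AE z in \<nu>. snd z \<noteq> 0"
    unfolding \<nu>_def using assms(6) AB by (subst AE_distr_iff) auto
  then have slice: "AE z in \<nu>. Pair z -` E = {(c - fst z) / snd z}"
    by eventually_elim (auto simp: E_def field_simps)
  then have "AE z in \<nu>. emeasure \<mu> (Pair z -` E) \<le> ennreal p"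
    by eventually_elim (simp add: \<mu>.emeasure_eq_measure p_def heaviest[folded \<mu>_def])
  then have "AE z in \<nu>. emeasure \<mu> (Pair z -` E) = ennreal p"
    by (rule \<nu>.AE_eq_bound_if_nn_integral_eq[OF slice_measurable _ total])
  with slice have "AE z in \<nu>. measure \<mu> {(c - fst z) / snd z} = p"
    by eventually_elim (simp add: \<mu>.emeasure_eq_measure p_def)
  then show ?thesis
    unfolding \<nu>_def using AB by (auto simp: \<mu>_def p_def dest: AE_distrD)
qed

lemma has_atom_distr_if_AE_const:
  assumes "prob_space M" and "X \<in> borel_measurable M" and "AE x in M. X x = c"
  shows "has_atom (distr M borel X)"
proof -
  interpret prob_space M by fact
  have "prob {x \<in> space M. X x = c} = 1"
    using assms(2,3) by (subst prob_Collect_eq_1) auto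
  then have "measure (distr M borel X) {c} = 1"
    using assms(2) by (simp add: measure_distr vimage_def Int_def conj_commute)
  then show ?thesis unfolding has_atom_def by (intro exI[of _ c]) simp
qed

locale random_affine_fixpoint = prob_space M
  for M :: "'a measure" and Q Mt \<psi>t :: "real \<Rightarrow> 'a \<Rightarrow> real" and \<psi> :: "'a \<Rightarrow> real" +
  assumes \<psi>_measurable: "\<psi> \<in> borel_measurable M"
    and Q_measurable: "\<And>t. t \<ge> 0 \<Longrightarrow> Q t \<in> borel_measurable M"
    and Mt_measurable: "\<And>t. t \<ge> 0 \<Longrightarrow> Mt t \<in> borel_measurable M"
    and \<psi>t_measurable: "\<And>t. t \<ge> 0 \<Longrightarrow> \<psi>t t \<in> borel_measurable M"
    and Mt_nonzero: "\<And>t. t \<ge> 0 \<Longrightarrow> AE x in M. Mt t x \<noteq> 0"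
    and \<psi>t_indep: "\<And>t. t \<ge> 0 \<Longrightarrow>
      indep_rv M borel (\<psi>t t) (borel \<Otimes>\<^sub>M borel) (\<lambda>x. (Q t x, Mt t x))"
    and affine: "\<And>t. t \<ge> 0 \<Longrightarrow> AE x in M. \<psi> x = Q t x + Mt t x * \<psi>t t x"
    and \<psi>t_distr: "\<And>t. t \<ge> 0 \<Longrightarrow> distr M borel \<psi> = distr M borel (\<psi>t t)"
    and Q_conv: "conv_in_prob M Q \<psi>"
begin

lemma eventually_measurable:
  shows Q_eventually_measurable: "\<forall>\<^sub>F t in at_top. Q t \<in> borel_measurable M"
    and Mt_eventually_measurable: "\<forall>\<^sub>F t in at_top. Mt t \<in> borel_measurable M"
  using Q_measurable Mt_measurable by (auto intro: eventually_at_top_linorderI)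

lemma Mt_conv_zero:
  assumes "\<not> (AE x in M. \<psi> x = 0)"
  shows "conv_in_prob M Mt (\<lambda>_. 0)"
proof (rule conv_in_prob_zero_factor[OF prob_space_axioms \<psi>_measurable assms])
  show "\<forall>\<^sub>F t in at_top. Mt t \<in> borel_measurable M
      \<and> indep_rv M borel (\<psi>t t) borel (Mt t) \<and> distr M borel (\<psi>t t) = distr M borel \<psi>"
  proof (rule eventually_at_top_linorderI)
    fix t :: real assume "t \<ge> 0"
    have "indep_rv M borel (\<psi>t t) borel (\<lambda>x. snd (Q t x, Mt t x))"
      using \<psi>t_indep[OF \<open>t \<ge> 0\<close>] measurable_snd
      by (rule indep_rv_compose_right[OF prob_space_axioms])
    then show "Mt t \<in> borel_measurable M
        \<and> indep_rv M borel (\<psi>t t) borel (Mt t) \<and> distr M borel (\<psi>t t) = distr M borel \<psi>"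
      using Mt_measurable \<psi>t_distr \<open>t \<ge> 0\<close> by simp
  qed
  have "\<forall>\<^sub>F t in at_top. AE x in M. \<bar>Mt t x * \<psi>t t x - 0\<bar> \<le> 1 * \<bar>Q t x - \<psi> x\<bar>"
  proof (rule eventually_at_top_linorderI)
    fix t :: real assume "t \<ge> 0"
    from affine[OF this] show "AE x in M. \<bar>Mt t x * \<psi>t t x - 0\<bar> \<le> 1 * \<bar>Q t x - \<psi> x\<bar>"
      by eventually_elim simp
  qed
  then show "conv_in_prob M (\<lambda>t x. Mt t x * \<psi>t t x) (\<lambda>_. 0)"
    using conv_in_prob_dominated[OF finite_measure_axioms zero_less_one Q_eventually_measurable
        \<psi>_measurable _ Q_conv] by simp
qed

lemma Q_conv_heaviest_atom:
  assumes Mt_conv: "conv_in_prob M Mt (\<lambda>_. 0)"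
    and heaviest: "\<And>a. measure (distr M borel \<psi>) {a} \<le> measure (distr M borel \<psi>) {c}"
    and "0 < measure (distr M borel \<psi>) {c}"
  shows "conv_in_prob M Q (\<lambda>_. c)"
proof -
  let ?\<mu> = "distr M borel \<psi>"
  interpret \<mu>: prob_space ?\<mu> using \<psi>_measurable by (rule prob_space_distr)
  have "finite {a. measure ?\<mu> {c} / 2 < measure ?\<mu> {a}}"
    using \<open>0 < measure ?\<mu> {c}\<close> by (intro finite_heavy_atoms[OF \<mu>.finite_measure_axioms]) simp_all
  then have "finite {a. measure ?\<mu> {a} = measure ?\<mu> {c}}"
    by (rule rev_finite_subset) (use \<open>0 < measure ?\<mu> {c}\<close> in auto)
  then have "bounded {a. measure ?\<mu> {a} = measure ?\<mu> {c}}" by (rule finite_imp_bounded)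
  then obtain R where "R > 0" and R: "\<forall>a \<in> {a. measure ?\<mu> {a} = measure ?\<mu> {c}}. norm a \<le> R"
    unfolding bounded_pos by blast
  have "\<forall>\<^sub>F t in at_top. AE x in M. \<bar>Q t x - c\<bar> \<le> R * \<bar>Mt t x - 0\<bar>"
  proof (rule eventually_at_top_linorderI)
    fix t :: real assume t: "t \<ge> 0"
    have "AE x in M. measure ?\<mu> {(c - Q t x) / Mt t x} = measure ?\<mu> {c}"
      using heaviest_atom_affine_preimage[OF prob_space_axioms
          Q_measurable[OF t] Mt_measurable[OF t] \<psi>_measurable \<psi>t_indep[OF t] Mt_nonzero[OF t] affine[OF t] \<psi>t_distr[OF t]] heaviest
      unfolding \<psi>t_distr[OF t] by blast
    with Mt_nonzero[OF t] show "AE x in M. \<bar>Q t x - c\<bar> \<le> R * \<bar>Mt t x - 0\<bar>"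
    proof eventually_elim
      case (elim x)
      have "\<bar>Q t x - c\<bar> = \<bar>Mt t x\<bar> * \<bar>(c - Q t x) / Mt t x\<bar>"
        using elim by (simp add: abs_divide abs_minus_commute)
      also have "\<dots> \<le> \<bar>Mt t x\<bar> * R" using R elim(2) by (intro mult_left_mono) auto
      finally show ?case by (simp add: mult.commute)
    qed
  qed
  then show ?thesis
    using conv_in_prob_dominated[OF finite_measure_axioms \<open>R > 0\<close> Mt_eventually_measurable
        borel_measurable_const _ Mt_conv] by simp
qed

end

theorem lemma2p1:
  fixes M :: "'a measure"
    and Q Mt \<psi>t :: "real \<Rightarrow> 'a \<Rightarrow> real"
    and \<psi> :: "'a \<Rightarrow> real"
  assumes "prob_space M"
    and "\<psi> \<in> borel_measurable M"
    and "\<And>t. t \<ge> 0 \<Longrightarrow> Q t \<in> borel_measurable M"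
    and "\<And>t. t \<ge> 0 \<Longrightarrow> Mt t \<in> borel_measurable M"
    and "\<And>t. t \<ge> 0 \<Longrightarrow> \<psi>t t \<in> borel_measurable M"
    and "\<And>t. t \<ge> 0 \<Longrightarrow> AE x in M. Mt t x \<noteq> 0"
    and "\<And>t. t \<ge> 0 \<Longrightarrow>
           indep_rv M borel (\<psi>t t) (borel \<Otimes>\<^sub>M borel) (\<lambda>x. (Q t x, Mt t x))"
    and "\<And>t. t \<ge> 0 \<Longrightarrow> AE x in M. \<psi> x = Q t x + Mt t x * \<psi>t t x"
    and "\<And>t. t \<ge> 0 \<Longrightarrow> distr M borel \<psi> = distr M borel (\<psi>t t)"
    and "conv_in_prob M Q \<psi>"
  shows "has_atom (distr M borel \<psi>) \<longleftrightarrow> (\<exists>c. AE x in M. \<psi> x = c)"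
proof
  interpret random_affine_fixpoint M Q Mt \<psi>t \<psi>
    using assms unfolding random_affine_fixpoint_def random_affine_fixpoint_axioms_def by blast
  let ?\<mu> = "distr M borel \<psi>"
  interpret \<mu>: prob_space ?\<mu> using \<psi>_measurable by (rule prob_space_distr)
  assume "has_atom ?\<mu>"
  then obtain c0 where "0 < measure ?\<mu> {c0}" unfolding has_atom_def by blast
  moreover obtain c where heaviest: "\<And>a. measure ?\<mu> {a} \<le> measure ?\<mu> {c}"
    using exists_heaviest_atom[OF \<mu>.finite_measure_axioms _ calculation]
    by (auto simp: borel_closed)
  ultimately have "0 < measure ?\<mu> {c}" using less_le_trans by blast
  show "\<exists>c. AE x in M. \<psi> x = c"
  proof (cases "AE x in M. \<psi> x = 0")
    case False
    then have "conv_in_prob M Q (\<lambda>_. c)"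
      using Q_conv_heaviest_atom[OF Mt_conv_zero heaviest \<open>0 < measure ?\<mu> {c}\<close>] by blast
    then have "AE x in M. \<psi> x = c"
      by (rule conv_in_prob_unique[OF finite_measure_axioms Q_eventually_measurable \<psi>_measurable
            borel_measurable_const Q_conv])
    then show ?thesis ..
  qed (rule exI)
next
  assume "\<exists>c. AE x in M. \<psi> x = c"
  then show "has_atom (distr M borel \<psi>)"
    by (elim exE) (rule has_atom_distr_if_AE_const[OF assms(1,2)])
qed

end
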